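(* Every $M_1\in GL_n(\mathbb{C}(\{z-1\}))$ can be written $M_1=C^{(1)}R^{(1)}$ where $R^{(1)}\in GL_n(\mathbb{C}(\{z-1\}))$ is regular at $1$ and $C^{(1)}\in GL_n(\mathbb{C}(z))$ is regular at $0$ and $\infty$ and of the form $C^{(1)}=u^{-k}T_{i_1,\underline{l_1}}D_{i_1,u}\cdots T_{i_r,\underline{l_r}}D_{i_r,u}$ with $k\in\mathbb{N}$, $r\in\mathbb{N}$, $i_1,\dots,i_r\in\{1,\dots,n\}$, $\underline{l_1},\dots,\underline{l_r}\in\mathbb{C}^n\setminus\{0\}$ and $u=\frac{z-1}{z+1}$.
   Context: $\mathbb{C}(\{z-1\})$ is the field of convergent Laurent series at $1$. A matrix is regular at $x\in\mathbb{C}$ if its entries are analytic at $x$ and its value at $x$ is invertible; regular at $\infty$ if $A(1/z)$ is regular at $0$. $D_{i,u}$ denotes the $n\times n$ identity matrix whose $(i,i)$ entry is replaced by $u$; for $\underline{l}=(l_1,\dots,l_n)$, $T_{i,\underline{l}}$ denotes the $n\times n$ identity matrix whose $i$-th row is replaced by $\underline{l}$. *)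

theory Defs
  imports "HOL-Complex_Analysis.Laurent_Convergence"
          "HOL-Computational_Algebra.Fraction_Field"
          "HOL-Computational_Algebra.Polynomial"
          "Jordan_Normal_Form.Determinant"
begin

text \<open>Elements of the field of convergent Laurent series at a point are modelled as
  formal Laurent series (in the local variable) with positive radius of convergence.\<close>
definition conv_fls :: "complex fls \<Rightarrow> bool" where
  "conv_fls f \<longleftrightarrow> fls_conv_radius f > 0"

definition GL_over :: "('a::semiring_1 \<Rightarrow> bool) \<Rightarrow> nat \<Rightarrow> 'a mat \<Rightarrow> bool" where
  "GL_over S n M \<longleftrightarrow> M \<in> carrier_mat n n \<and> (\<forall>i<n. \<forall>j<n. S (M $$ (i,j))) \<and>
     (\<exists>N. N \<in> carrier_mat n n \<and> (\<forall>i<n. \<forall>j<n. S (N $$ (i,j))) \<and>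
          M * N = 1\<^sub>m n \<and> N * M = 1\<^sub>m n)"

definition regular_fls :: "nat \<Rightarrow> complex fls mat \<Rightarrow> bool" where
  "regular_fls n A \<longleftrightarrow> A \<in> carrier_mat n n \<and>
     (\<forall>i<n. \<forall>j<n. conv_fls (A $$ (i,j)) \<and> fls_subdegree (A $$ (i,j)) \<ge> 0) \<and>
     invertible_mat (map_mat (\<lambda>f. fls_nth f 0) A)"

definition T_mat :: "(complex \<Rightarrow> 'a::field) \<Rightarrow> nat \<Rightarrow> nat \<Rightarrow> (nat \<Rightarrow> complex) \<Rightarrow> 'a mat" where
  "T_mat emb n i l = mat n n (\<lambda>(a,b). if a = i then emb (l b) else if a = b then 1 else 0)"

definition D_mat :: "nat \<Rightarrow> nat \<Rightarrow> 'a::field \<Rightarrow> 'a mat" where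
  "D_mat n i u = mat n n (\<lambda>(a,b). if a = b then (if a = i then u else 1) else 0)"

definition C_form :: "(complex \<Rightarrow> 'a::field) \<Rightarrow> nat \<Rightarrow> 'a \<Rightarrow> nat \<Rightarrow> (nat \<times> (nat \<Rightarrow> complex)) list \<Rightarrow> 'a mat" where
  "C_form emb n u k steps =
     (inverse u ^ k) \<cdot>\<^sub>m foldr (\<lambda>(i,l) A. T_mat emb n i l * D_mat n i u * A) steps (1\<^sub>m n)"

text \<open>u = (z-1)/(z+1) as a rational function, and its Laurent expansions:
  at z = 1 (variable w = z - 1): w/(2+w);
  at z = 0 (variable z): (z-1)/(z+1);
  at z = \<infinity> (variable t = 1/z): (1-t)/(1+t).\<close>
definition u_rat :: "complex poly fract" where
  "u_rat = Fract [:-1, 1:] [:1, 1:]"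
definition emb_rat :: "complex \<Rightarrow> complex poly fract" where
  "emb_rat c = Fract [:c:] 1"
definition u_at1 :: "complex fls" where
  "u_at1 = fls_X / (fls_const 2 + fls_X)"
definition u_at0 :: "complex fls" where
  "u_at0 = (fls_X - 1) / (fls_X + 1)"
definition u_atinf :: "complex fls" where
  "u_atinf = (1 - fls_X) / (1 + fls_X)"

end

(* Since u = (z-1)/(z+1) has a simple zero at z = 1, u^k M1 is analytic at 1 for k large.
   Induct on the order at 1 of det M for M analytic at 1 and invertible over the convergent
   Laurent series.  If M(1) is singular, a left null vector l of M(1), normalised by l_i = 1,
   makes the i-th row of T_{i,l} M vanish at 1; dividing that row by u keeps the entries
   analytic and lowers the order of det by one, and T_{i,l}^{-1} = T_{i,l'} with l'_i = 1
   again.  Once det M(1) is nonzero, M is regular at 1.  Each factor T_{i,l} D_{i,u} of the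
   product is invertible over C(z) and, since u is a unit of the convergent power series at 0
   and at infinity, regular there. *)

theory Submission
  imports Defs
begin

section \<open>Matrices invertible over a subsemiring\<close>

definition semiring_closed :: "('a::semiring_1 \<Rightarrow> bool) \<Rightarrow> bool" where
  "semiring_closed P \<longleftrightarrow> P 0 \<and> P 1 \<and> (\<forall>x y. P x \<longrightarrow> P y \<longrightarrow> P (x + y)) \<and>
     (\<forall>x y. P x \<longrightarrow> P y \<longrightarrow> P (x * y))"

lemma semiring_closedD:
  assumes "semiring_closed P"
  shows "P 0" "P 1" "P x \<Longrightarrow> P y \<Longrightarrow> P (x + y)" "P x \<Longrightarrow> P y \<Longrightarrow> P (x * y)"
  using assms unfolding semiring_closed_def by blast+

lemma semiring_closed_True: "semiring_closed (\<lambda>_. True)"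
  by (simp add: semiring_closed_def)

lemma semiring_closed_sum:
  assumes "semiring_closed P" "\<And>i. i \<in> I \<Longrightarrow> P (f i)"
  shows "P (sum f I)"
proof (cases "finite I")
  case True
  then show ?thesis using assms(2)
    by (induction I rule: finite_induct) (auto intro: semiring_closedD[OF assms(1)])
qed (simp add: semiring_closedD[OF assms(1)])

lemma semiring_closed_power:
  assumes "semiring_closed P" "P x"
  shows "P (x ^ k)"
  by (induction k) (auto intro: semiring_closedD[OF assms(1)] assms(2))

lemma semiring_closed_mult_mat:
  assumes P: "semiring_closed P" and A: "A \<in> carrier_mat nr m" and B: "B \<in> carrier_mat m nc"
    and PA: "\<forall>i<nr. \<forall>j<m. P (A $$ (i,j))" and PB: "\<forall>i<m. \<forall>j<nc. P (B $$ (i,j))"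
  shows "\<forall>i<nr. \<forall>j<nc. P ((A * B) $$ (i,j))"
proof (intro allI impI)
  fix i j assume ij: "i < nr" "j < nc"
  have "(A * B) $$ (i,j) = (\<Sum>k<m. A $$ (i,k) * B $$ (k,j))"
    using A B ij by (simp add: scalar_prod_def atLeast0LessThan)
  also have "P \<dots>"
    using PA PB ij by (intro semiring_closed_sum[OF P] semiring_closedD(4)[OF P]) auto
  finally show "P ((A * B) $$ (i,j))" .
qed

lemma GL_over_mono:
  assumes "GL_over P n A" "\<And>x. P x \<Longrightarrow> Q x"
  shows "GL_over Q n A"
proof -
  obtain N where "A \<in> carrier_mat n n" "\<forall>i<n. \<forall>j<n. P (A $$ (i,j))" "N \<in> carrier_mat n n"
    "\<forall>i<n. \<forall>j<n. P (N $$ (i,j))" "A * N = 1\<^sub>m n" "N * A = 1\<^sub>m n"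
    using assms(1) unfolding GL_over_def by blast
  then show ?thesis unfolding GL_over_def using assms(2) by (intro conjI exI[of _ N]) auto
qed

lemma GL_over_det_inverse:
  fixes A :: "'a::comm_ring_1 mat"
  assumes "GL_over P n A"
  obtains N where "N \<in> carrier_mat n n" "\<forall>i<n. \<forall>j<n. P (N $$ (i,j))" "det A * det N = 1"
proof -
  obtain N where A: "A \<in> carrier_mat n n"
    and N: "N \<in> carrier_mat n n" "\<forall>i<n. \<forall>j<n. P (N $$ (i,j))" "A * N = 1\<^sub>m n"
    using assms unfolding GL_over_def by blast
  have "det A * det N = 1" using det_mult[OF A N(1)] N(3) by simp
  with N show thesis using that by blast
qed

lemma GL_over_det_nonzero:
  fixes A :: "'a::comm_ring_1 mat"
  assumes "GL_over P n A"
  shows "det A \<noteq> 0"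
  using GL_over_det_inverse[OF assms] by (metis mult_zero_left zero_neq_one)

lemma GL_over_one:
  assumes "semiring_closed P"
  shows "GL_over P n (1\<^sub>m n)"
  unfolding GL_over_def using semiring_closedD[OF assms]
  by (intro conjI exI[of _ "1\<^sub>m n"]) auto

lemma GL_over_mult:
  fixes A B :: "'a::comm_ring_1 mat"
  assumes P: "semiring_closed P" and "GL_over P n A" "GL_over P n B"
  shows "GL_over P n (A * B)"
proof -
  obtain NA NB where A: "A \<in> carrier_mat n n" "\<forall>i<n. \<forall>j<n. P (A $$ (i,j))"
    and NA: "NA \<in> carrier_mat n n" "\<forall>i<n. \<forall>j<n. P (NA $$ (i,j))" "A * NA = 1\<^sub>m n" "NA * A = 1\<^sub>m n"
    and B: "B \<in> carrier_mat n n" "\<forall>i<n. \<forall>j<n. P (B $$ (i,j))"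
    and NB: "NB \<in> carrier_mat n n" "\<forall>i<n. \<forall>j<n. P (NB $$ (i,j))" "B * NB = 1\<^sub>m n" "NB * B = 1\<^sub>m n"
    using assms unfolding GL_over_def by blast
  have "A * B * (NB * NA) = A * ((B * NB) * NA)"
    using A(1) B(1) NA(1) NB(1) by (simp add: assoc_mult_mat[of _ n n _ n _ n])
  also have "\<dots> = 1\<^sub>m n" using NB(3) NA by simp
  moreover have "NB * NA * (A * B) = NB * ((NA * A) * B)"
    using A(1) B(1) NA(1) NB(1) by (simp add: assoc_mult_mat[of _ n n _ n _ n])
  moreover have "\<dots> = 1\<^sub>m n" using NA(4) B NB by simp
  ultimately have "A * B * (NB * NA) = 1\<^sub>m n" "NB * NA * (A * B) = 1\<^sub>m n"
    by auto
  moreover have "\<forall>i<n. \<forall>j<n. P ((A * B) $$ (i,j))" "\<forall>i<n. \<forall>j<n. P ((NB * NA) $$ (i,j))"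
    using semiring_closed_mult_mat[OF P] A B NA NB by blast+
  ultimately show ?thesis
    unfolding GL_over_def using A B NA NB by (intro conjI exI[of _ "NB * NA"]) auto
qed

lemma GL_over_smult:
  fixes A :: "'a::comm_ring_1 mat"
  assumes P: "semiring_closed P" and c: "P c" "P d" "c * d = 1" and A: "GL_over P n A"
  shows "GL_over P n (c \<cdot>\<^sub>m A)"
proof -
  obtain N where A: "A \<in> carrier_mat n n" "\<forall>i<n. \<forall>j<n. P (A $$ (i,j))"
    and N: "N \<in> carrier_mat n n" "\<forall>i<n. \<forall>j<n. P (N $$ (i,j))" "A * N = 1\<^sub>m n" "N * A = 1\<^sub>m n"
    using assms unfolding GL_over_def by blast
  have "(x \<cdot>\<^sub>m X) * (y \<cdot>\<^sub>m Y) = (x * y) \<cdot>\<^sub>m (X * Y)"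
    if "X \<in> carrier_mat n n" "Y \<in> carrier_mat n n" for x y and X Y :: "'a mat"
    using that by (simp add: mult_smult_assoc_mat[of _ n n] mult_smult_distrib[of _ n n])
      (intro eq_matI, auto)
  then have "(c \<cdot>\<^sub>m A) * (d \<cdot>\<^sub>m N) = 1\<^sub>m n" "(d \<cdot>\<^sub>m N) * (c \<cdot>\<^sub>m A) = 1\<^sub>m n"
    using A N c(3) by (auto simp: mult.commute intro!: eq_matI)
  then show ?thesis
    unfolding GL_over_def using A N semiring_closedD(4)[OF P] c
    by (intro conjI exI[of _ "d \<cdot>\<^sub>m N"]) auto
qed

lemma invertible_mat_if_det_nonzero:
  fixes A :: "'a::field mat"
  assumes A: "A \<in> carrier_mat n n" and det: "det A \<noteq> 0"
  shows "invertible_mat A"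
proof -
  obtain B where "B \<in> carrier_mat n n" "B * A = 1\<^sub>m n" "A * B = 1\<^sub>m n"
    using det_non_zero_imp_unit[OF A det, of "()"] unfolding Units_def ring_mat_def by auto
  then show ?thesis
    using A unfolding invertible_mat_def inverts_mat_def by auto
qed

lemma exists_normalized_left_null_vector:
  fixes A :: "'a::field mat"
  assumes A: "A \<in> carrier_mat n n" and det: "det A = 0"
  obtains i l where "i < n" "l i = 1" "\<forall>c<n. (\<Sum>b<n. l b * A $$ (b,c)) = 0"
proof -
  have "det (transpose_mat A) = 0" using det det_transpose[OF A] by simp
  then obtain v where v: "v \<in> carrier_vec n" "v \<noteq> 0\<^sub>v n" "transpose_mat A *\<^sub>v v = 0\<^sub>v n"
    using det_0_iff_vec_prod_zero_field[of "transpose_mat A" n] A by auto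
  obtain i where i: "i < n" "v $ i \<noteq> 0"
    using v(1,2) by (metis carrier_vecD eq_vecI index_zero_vec)
  define l where "l b = v $ b / v $ i" for b
  have "(\<Sum>b<n. l b * A $$ (b,c)) = 0" if c: "c < n" for c
  proof -
    have "(\<Sum>b<n. A $$ (b,c) * v $ b) = (transpose_mat A *\<^sub>v v) $ c"
      using c A v(1) by (simp add: mult_mat_vec_def scalar_prod_def atLeast0LessThan)
    then have "(\<Sum>b<n. A $$ (b,c) * v $ b) = 0" using v(3) c by simp
    then show ?thesis by (simp add: l_def sum_divide_distrib[symmetric] mult.commute)
  qed
  moreover have "l i = 1" using i by (simp add: l_def)
  ultimately show thesis using that i by blast
qed

section \<open>The elementary matrices T and D\<close>

lemma T_mat_carrier [simp]: "T_mat emb n i l \<in> carrier_mat n n"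
  by (simp add: T_mat_def)

lemma D_mat_carrier [simp]: "D_mat n i u \<in> carrier_mat n n"
  by (simp add: D_mat_def)

lemma T_mat_dim [simp]: "dim_row (T_mat emb n i l) = n" "dim_col (T_mat emb n i l) = n"
  by (simp_all add: T_mat_def)

lemma D_mat_dim [simp]: "dim_row (D_mat n i u) = n" "dim_col (D_mat n i u) = n"
  by (simp_all add: D_mat_def)

lemma T_mat_index:
  "a < n \<Longrightarrow> b < n \<Longrightarrow>
    T_mat emb n i l $$ (a,b) = (if a = i then emb (l b) else if a = b then 1 else 0)"
  by (simp add: T_mat_def)

lemma D_mat_index:
  "a < n \<Longrightarrow> b < n \<Longrightarrow> D_mat n i u $$ (a,b) = (if a = b then if a = i then u else 1 else 0)"
  by (simp add: D_mat_def)

lemma T_mat_mult_index: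
  assumes "X \<in> carrier_mat n m" "a < n" "c < m"
  shows "(T_mat emb n i l * X) $$ (a,c) =
    (if a = i then (\<Sum>b<n. emb (l b) * X $$ (b,c)) else X $$ (a,c))"
proof -
  have "(T_mat emb n i l * X) $$ (a,c) = (\<Sum>b<n. T_mat emb n i l $$ (a,b) * X $$ (b,c))"
    using assms by (simp add: scalar_prod_def atLeast0LessThan)
  also have "\<dots> = (if a = i then (\<Sum>b<n. emb (l b) * X $$ (b,c)) else X $$ (a,c))"
    using assms(2) by (simp add: T_mat_index if_distrib[of "\<lambda>x. x * _"] cong: if_cong)
  finally show ?thesis .
qed

lemma D_mat_mult_index:
  assumes "X \<in> carrier_mat n m" "a < n" "c < m"
  shows "(D_mat n i u * X) $$ (a,c) = (if a = i then u * X $$ (a,c) else X $$ (a,c))"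
proof -
  have "(D_mat n i u * X) $$ (a,c) = (\<Sum>b<n. D_mat n i u $$ (a,b) * X $$ (b,c))"
    using assms by (simp add: scalar_prod_def atLeast0LessThan)
  also have "\<dots> = (if a = i then u * X $$ (a,c) else X $$ (a,c))"
    using assms(2) by (simp add: D_mat_index if_distrib[of "\<lambda>x. x * _"] cong: if_cong)
  finally show ?thesis .
qed

lemma D_mat_mult: "D_mat n i u * D_mat n i v = D_mat n i (u * v)"
  by (intro eq_matI)
    (auto simp: D_mat_mult_index[where m = n] D_mat_index index_mult_mat(2,3)
      simp del: index_mult_mat(1))

lemma D_mat_1: "D_mat n i 1 = 1\<^sub>m n"
  by (intro eq_matI) (auto simp: D_mat_index)

lemma det_D_mat: "i < n \<Longrightarrow> det (D_mat n i u) = u"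
proof -
  have "D_mat n i u = multrow_mat n i u"
    by (intro eq_matI) (auto simp: D_mat_def multrow_mat_def)
  then show "i < n \<Longrightarrow> det (D_mat n i u) = u"
    by (simp add: det_multrow_mat)
qed

definition T_inv_row :: "(nat \<Rightarrow> complex) \<Rightarrow> nat \<Rightarrow> nat \<Rightarrow> complex" where
  "T_inv_row l i = (\<lambda>b. if b = i then 1 else - l b)"

lemma T_inv_row_pivot: "T_inv_row l i i = 1"
  by (simp add: T_inv_row_def)

lemma T_inv_row_involutive: "l i = 1 \<Longrightarrow> T_inv_row (T_inv_row l i) i = l"
  by (auto simp: T_inv_row_def)

lemma T_mat_mult_T_inv_row:
  fixes emb :: "complex \<Rightarrow> 'a::field"
  assumes emb: "comm_ring_hom emb" and i: "i < n" and li: "l i = 1"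
  shows "T_mat emb n i l * T_mat emb n i (T_inv_row l i) = 1\<^sub>m n"
proof (rule eq_matI)
  interpret comm_ring_hom emb by (rule emb)
  fix a c assume "a < dim_row (1\<^sub>m n)" "c < dim_col (1\<^sub>m n)"
  then have a: "a < n" and c: "c < n" by auto
  let ?T' = "T_mat emb n i (T_inv_row l i)"
  have "(T_mat emb n i l * ?T') $$ (a,c) =
    (if a = i then (\<Sum>b<n. emb (l b) * ?T' $$ (b,c)) else ?T' $$ (a,c))"
    by (rule T_mat_mult_index[OF _ a c]) simp
  also have "\<dots> = 1\<^sub>m n $$ (a,c)"
  proof (cases "a = i")
    case True
    have "(\<Sum>b<n. emb (l b) * ?T' $$ (b,c)) =
      emb (l i) * ?T' $$ (i,c) + (\<Sum>b\<in>{..<n}-{i}. emb (l b) * ?T' $$ (b,c))"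
      using i by (subst sum.remove[of _ i]) auto
    also have "(\<Sum>b\<in>{..<n}-{i}. emb (l b) * ?T' $$ (b,c)) = (if c \<noteq> i then emb (l c) else 0)"
      using c by (simp add: T_mat_index if_distrib[of "\<lambda>x. _ * x"] sum.delta' cong: if_cong)
    finally show ?thesis
      using True a c i li by (simp add: T_mat_index T_inv_row_def hom_uminus)
  qed (use a c in \<open>simp add: T_mat_index\<close>)
  finally show "(T_mat emb n i l * ?T') $$ (a,c) = 1\<^sub>m n $$ (a,c)" .
qed auto

lemma T_inv_row_mult_T_mat:
  fixes emb :: "complex \<Rightarrow> 'a::field"
  assumes emb: "comm_ring_hom emb" and i: "i < n" and li: "l i = 1"
  shows "T_mat emb n i (T_inv_row l i) * T_mat emb n i l = 1\<^sub>m n"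
  using T_mat_mult_T_inv_row[where l = "T_inv_row l i", OF emb i]
  by (simp add: T_inv_row_pivot T_inv_row_involutive li)

lemma T_D_mult_cancel:
  fixes emb :: "complex \<Rightarrow> 'a::field"
  assumes emb: "comm_ring_hom emb" and i: "i < n" and li: "l i = 1" and u: "u \<noteq> 0"
    and A: "A \<in> carrier_mat n n"
  shows "T_mat emb n i (T_inv_row l i) * D_mat n i u * (D_mat n i (inverse u) * (T_mat emb n i l * A)) = A"
    (is "?T' * ?D * (?D' * (?T * A)) = A")
proof -
  have "?T' * ?D * (?D' * (?T * A)) = ?T' * ((?D * ?D') * (?T * A))"
    using A by (simp add: assoc_mult_mat[of _ n n _ n _ n] mult_carrier_mat[of _ n n _ n])
  also have "\<dots> = (?T' * ?T) * A"
    using u A by (simp add: D_mat_mult D_mat_1 assoc_mult_mat[of _ n n _ n _ n])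
  also have "\<dots> = A"
    using A by (simp add: T_inv_row_mult_T_mat[where l = l, OF emb i li])
  finally show ?thesis .
qed

lemma GL_over_T_mat:
  fixes emb :: "complex \<Rightarrow> 'a::field"
  assumes P: "semiring_closed P" "\<And>c. P (emb c)" and emb: "comm_ring_hom emb"
    and i: "i < n" and li: "l i = 1"
  shows "GL_over P n (T_mat emb n i l)"
  unfolding GL_over_def
  using T_mat_mult_T_inv_row[where l = l, OF emb i li] T_inv_row_mult_T_mat[where l = l, OF emb i li] P
  by (intro conjI exI[of _ "T_mat emb n i (T_inv_row l i)"])
    (auto simp: T_mat_index semiring_closedD[OF P(1)])

lemma GL_over_D_mat:
  fixes u :: "'a::field"
  assumes P: "semiring_closed P" "P u" "P (inverse u)" and u: "u \<noteq> 0"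
  shows "GL_over P n (D_mat n i u)"
  unfolding GL_over_def using P u
  by (intro conjI exI[of _ "D_mat n i (inverse u)"])
    (auto simp: D_mat_index D_mat_mult D_mat_1 semiring_closedD[OF P(1)])

definition TD_product ::
  "(complex \<Rightarrow> 'a::field) \<Rightarrow> nat \<Rightarrow> 'a \<Rightarrow> (nat \<times> (nat \<Rightarrow> complex)) list \<Rightarrow> 'a mat" where
  "TD_product emb n u steps = foldr (\<lambda>(i,l) A. T_mat emb n i l * D_mat n i u * A) steps (1\<^sub>m n)"

lemma TD_product_Nil: "TD_product emb n u [] = 1\<^sub>m n"
  by (simp add: TD_product_def)

lemma TD_product_Cons:
  "TD_product emb n u ((i,l) # steps) = T_mat emb n i l * D_mat n i u * TD_product emb n u steps"
  by (simp add: TD_product_def)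

lemma TD_product_carrier [simp]: "TD_product emb n u steps \<in> carrier_mat n n"
  by (induction steps) (auto simp: TD_product_def intro!: mult_carrier_mat[of _ n n])

lemma C_form_TD_product: "C_form emb n u k steps = inverse u ^ k \<cdot>\<^sub>m TD_product emb n u steps"
  by (simp add: C_form_def TD_product_def)

definition normalized_steps :: "nat \<Rightarrow> (nat \<times> (nat \<Rightarrow> complex)) list \<Rightarrow> bool" where
  "normalized_steps n steps \<longleftrightarrow> (\<forall>(i,l) \<in> set steps. i < n \<and> l i = 1)"

lemma normalized_steps_Cons:
  "normalized_steps n ((i,l) # steps) \<longleftrightarrow> i < n \<and> l i = 1 \<and> normalized_steps n steps"
  by (simp add: normalized_steps_def)

lemma GL_over_TD_product:
  fixes emb :: "complex \<Rightarrow> 'a::field"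
  assumes P: "semiring_closed P" "\<And>c. P (emb c)" "P u" "P (inverse u)"
    and emb: "comm_ring_hom emb" and u: "u \<noteq> 0" and steps: "normalized_steps n steps"
  shows "GL_over P n (TD_product emb n u steps)"
  using steps
proof (induction steps)
  case Nil
  show ?case by (simp add: TD_product_Nil GL_over_one[OF P(1)])
next
  case (Cons step steps)
  obtain i l where step: "step = (i,l)" by fastforce
  with Cons.prems have "i < n" "l i = 1" "normalized_steps n steps"
    by (simp_all add: normalized_steps_Cons)
  with Cons.IH show ?case
    unfolding step TD_product_Cons
    by (intro GL_over_mult[OF P(1)] GL_over_T_mat[OF P(1,2) emb] GL_over_D_mat[OF P(1,3,4) u])
qed

lemma GL_over_C_form:
  fixes emb :: "complex \<Rightarrow> 'a::field"
  assumes P: "semiring_closed P" "\<And>c. P (emb c)" "P u" "P (inverse u)"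
    and emb: "comm_ring_hom emb" and u: "u \<noteq> 0" and steps: "normalized_steps n steps"
  shows "GL_over P n (C_form emb n u k steps)"
  unfolding C_form_TD_product
  using u semiring_closed_power[OF P(1)] P(3,4)
  by (intro GL_over_smult[OF P(1), where d = "u ^ k"] GL_over_TD_product[OF assms])
    (auto simp: power_mult_distrib[symmetric])

lemma C_form_mult_if_power_smult_eq:
  assumes R: "R \<in> carrier_mat n n" and u: "u \<noteq> 0"
    and A: "u ^ k \<cdot>\<^sub>m A = TD_product emb n u steps * R"
  shows "A = C_form emb n u k steps * R"
proof -
  have "A = inverse u ^ k \<cdot>\<^sub>m (u ^ k \<cdot>\<^sub>m A)"
    using u by (intro eq_matI) (auto simp: power_mult_distrib[symmetric])
  then show ?thesis
    unfolding A C_form_TD_product by (simp add: mult_smult_assoc_mat[OF TD_product_carrier R])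
qed

section \<open>Convergent and analytic Laurent series\<close>

abbreviation fls_analytic :: "'a::zero fls \<Rightarrow> bool" where
  "fls_analytic f \<equiv> 0 \<le> fls_subdegree f"

text \<open>The value at the expansion point only when \<open>fls_analytic f\<close>: the principal part is ignored.\<close>

abbreviation fls_value :: "'a::zero fls \<Rightarrow> 'a" where
  "fls_value f \<equiv> fls_nth f 0"

lemma fls_analytic_add:
  fixes f g :: "'a::comm_ring_1 fls"
  shows "fls_analytic f \<Longrightarrow> fls_analytic g \<Longrightarrow> fls_analytic (f + g)"
  using fls_plus_subdegree[of f g] by (cases "f + g = 0") auto

lemma semiring_closed_fls_analytic: "semiring_closed (fls_analytic :: 'a::comm_ring_1 fls \<Rightarrow> bool)"
  unfolding semiring_closed_def by (auto intro: fls_analytic_add fls_mult_subdegree_ge_0)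

lemma fls_value_mult:
  fixes f g :: "'a::comm_ring_1 fls"
  assumes "fls_analytic f" "fls_analytic g"
  shows "fls_value (f * g) = fls_value f * fls_value g"
  using assms by (simp add: fls_times_conv_fps_times)

lemma fls_subdegree_eq_0I:
  assumes "fls_analytic f" "fls_value f \<noteq> 0"
  shows "fls_subdegree f = 0"
  using assms fls_subdegree_leI[OF assms(2)] by linarith

lemma exists_power_mult_analytic:
  fixes u :: "'a::field fls"
  assumes u: "fls_subdegree u = 1"
  obtains k where "\<forall>a<n. \<forall>c<n. fls_analytic (u ^ k * M $$ (a,c))"
proof -
  define k where "k = (\<Sum>(a,c)\<in>{..<n} \<times> {..<n}. nat (- fls_subdegree (M $$ (a,c))))"
  have "fls_analytic (u ^ k * M $$ (a,c))" if "a < n" "c < n" for a c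
  proof (cases "M $$ (a,c) = 0")
    case False
    have "(\<lambda>(a,c). nat (- fls_subdegree (M $$ (a,c)))) (a,c) \<le> k"
      unfolding k_def by (rule member_le_sum) (use that in auto)
    moreover have "u \<noteq> 0" using u by auto
    ultimately show ?thesis
      using False u by (simp add: fls_subdegree_mult fls_subdegree_pow)
  qed simp
  then show thesis using that by blast
qed

lemma conv_fls_add: "conv_fls f \<Longrightarrow> conv_fls g \<Longrightarrow> conv_fls (f + g)"
  unfolding conv_fls_def using fls_conv_radius_add[of f g] by (simp add: min_def split: if_splits)

lemma conv_fls_mult: "conv_fls f \<Longrightarrow> conv_fls g \<Longrightarrow> conv_fls (f * g)"
  unfolding conv_fls_def using fls_conv_radius_mult[of f g] by (simp add: min_def split: if_splits)

lemma conv_fls_fps_to_fls: "conv_fls (fps_to_fls f) \<longleftrightarrow> fps_conv_radius f > 0"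
  by (simp add: conv_fls_def)

lemma conv_fls_const: "conv_fls (fls_const c)"
  using conv_fls_fps_to_fls[of "fps_const c"] by simp

lemma conv_fls_inverse: "conv_fls f \<Longrightarrow> conv_fls (inverse f)"
proof (cases "f = 0")
  case False
  assume "conv_fls f"
  then show ?thesis
    unfolding conv_fls_def fls_conv_radius_altdef fls_base_factor_to_fps_inverse
    by (intro fps_conv_radius_inverse_pos fls_base_factor_to_fps_base False)
qed simp

lemma conv_fls_divide: "conv_fls f \<Longrightarrow> conv_fls g \<Longrightarrow> conv_fls (f / g)"
  by (simp add: divide_inverse conv_fls_mult conv_fls_inverse)

lemma semiring_closed_conv_fls: "semiring_closed conv_fls"
  unfolding semiring_closed_def
  by (metis conv_fls_add conv_fls_mult conv_fls_const fls_const_0 fls_const_1)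

lemma semiring_closed_conv_analytic: "semiring_closed (\<lambda>f. conv_fls f \<and> fls_analytic f)"
  using semiring_closedD[OF semiring_closed_conv_fls]
  unfolding semiring_closed_def by (auto intro: fls_analytic_add fls_mult_subdegree_ge_0)

lemma comm_ring_hom_fls_const: "comm_ring_hom (fls_const :: 'a::comm_ring_1 \<Rightarrow> 'a fls)"
  by unfold_locales (simp_all add: fls_plus_const fls_const_mult_const)

lemma fps_to_fls_unit:
  fixes f :: "complex fps"
  assumes "f $ 0 \<noteq> 0" "fps_conv_radius f > 0"
  shows "conv_fls (fps_to_fls f)" "fls_subdegree (fps_to_fls f) = 0" "fps_to_fls f \<noteq> 0"
  using assms by (auto simp: conv_fls_fps_to_fls fls_subdegree_fls_to_fps subdegree_eq_0)

lemma analytic_det: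
  fixes A :: "'a::comm_ring_1 fls mat"
  assumes "A \<in> carrier_mat n n" "\<forall>i<n. \<forall>j<n. fls_analytic (A $$ (i,j))"
  shows "fls_analytic (det A)" "fls_value (det A) = det (map_mat fls_value A)"
proof -
  interpret to_fls: comm_ring_hom "fps_to_fls :: 'a fps \<Rightarrow> 'a fls"
    by unfold_locales (simp_all add: fls_times_fps_to_fls)
  interpret coeff0: comm_ring_hom "\<lambda>f :: 'a fps. f $ 0"
    by unfold_locales simp_all
  let ?B = "map_mat fls_regpart A"
  have A: "A = map_mat fps_to_fls ?B"
    using assms by (intro eq_matI) auto
  have "det A = fps_to_fls (det ?B)"
    by (subst A) (rule to_fls.hom_det)
  moreover have "map_mat fls_value A = map_mat (\<lambda>f. f $ 0) ?B"
    by (subst A) (intro eq_matI, auto)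
  ultimately show "fls_analytic (det A)" "fls_value (det A) = det (map_mat fls_value A)"
    by (simp_all add: fls_subdegree_fls_to_fps_gt0 coeff0.hom_det)
qed

lemma GL_over_analytic_det_value_nonzero:
  fixes A :: "'a::comm_ring_1 fls mat"
  assumes "GL_over fls_analytic n A"
  shows "fls_value (det A) \<noteq> 0"
proof -
  obtain N where N: "N \<in> carrier_mat n n" "\<forall>i<n. \<forall>j<n. fls_analytic (N $$ (i,j))"
    and det: "det A * det N = 1"
    using GL_over_det_inverse[OF assms] by blast
  have A: "A \<in> carrier_mat n n" "\<forall>i<n. \<forall>j<n. fls_analytic (A $$ (i,j))"
    using assms unfolding GL_over_def by blast+
  have "fls_value (det A) * fls_value (det N) = 1"
    using fls_value_mult[OF analytic_det(1)[OF A] analytic_det(1)[OF N]] det by simp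
  then show ?thesis by auto
qed

lemma regular_flsI:
  assumes A: "A \<in> carrier_mat n n"
    and entries: "\<forall>i<n. \<forall>j<n. conv_fls (A $$ (i,j)) \<and> fls_analytic (A $$ (i,j))"
    and det: "fls_value (det A) \<noteq> 0"
  shows "regular_fls n A"
proof -
  have "det (map_mat fls_value A) \<noteq> 0"
    using analytic_det(2)[OF A] entries det by simp
  then have "invertible_mat (map_mat fls_value A)"
    using A by (intro invertible_mat_if_det_nonzero[of _ n]) auto
  then show ?thesis
    unfolding regular_fls_def using A entries by blast
qed

lemma regular_fls_if_GL_over_analytic:
  assumes "GL_over (\<lambda>f. conv_fls f \<and> fls_analytic f) n A"
  shows "regular_fls n A"
proof (rule regular_flsI)
  show "A \<in> carrier_mat n n" "\<forall>i<n. \<forall>j<n. conv_fls (A $$ (i,j)) \<and> fls_analytic (A $$ (i,j))"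
    using assms unfolding GL_over_def by blast+
  show "fls_value (det A) \<noteq> 0"
    using assms by (intro GL_over_analytic_det_value_nonzero) (erule GL_over_mono, simp)
qed

lemma regular_fls_C_form:
  assumes u: "conv_fls u" "fls_subdegree u = 0" "u \<noteq> 0" and steps: "normalized_steps n steps"
  shows "regular_fls n (C_form fls_const n u k steps)"
  using u conv_fls_inverse[OF u(1)] conv_fls_const
  by (intro regular_fls_if_GL_over_analytic GL_over_C_form[OF semiring_closed_conv_analytic _ _ _
        comm_ring_hom_fls_const u(3) steps]) simp_all

section \<open>The coordinate u at 1, 0 and infinity\<close>

lemma u_rat_nonzero: "u_rat \<noteq> 0"
  by (simp add: u_rat_def eq_fract Zero_fract_def)

lemma comm_ring_hom_emb_rat: "comm_ring_hom emb_rat"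
  by unfold_locales (simp_all add: emb_rat_def One_fract_def Zero_fract_def pCons_one mult.commute)

lemma fps_conv_radius_X_plus_const: "fps_conv_radius (fps_X + fps_const c :: complex fps) > 0"
  using fps_conv_radius_add[of "fps_X :: complex fps" "fps_const c"] by auto

lemma u_at0_unit: "conv_fls u_at0" "fls_subdegree u_at0 = 0" "u_at0 \<noteq> 0"
proof -
  define a b :: "complex fps" where "a = fps_X + fps_const (-1)" and "b = fps_X + fps_const 1"
  have u: "u_at0 = fps_to_fls a / fps_to_fls b"
    by (simp add: u_at0_def a_def b_def fps_const_neg[symmetric])
  have "fps_conv_radius a > 0" "fps_conv_radius b > 0"
    unfolding a_def b_def by (rule fps_conv_radius_X_plus_const)+
  moreover have "a $ 0 \<noteq> 0" "b $ 0 \<noteq> 0"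
    by (simp_all add: a_def b_def)
  ultimately show "conv_fls u_at0" "fls_subdegree u_at0 = 0" "u_at0 \<noteq> 0"
    unfolding u using fps_to_fls_unit by (simp_all add: conv_fls_divide fls_divide_subdegree)
qed

lemma u_atinf_unit: "conv_fls u_atinf" "fls_subdegree u_atinf = 0" "u_atinf \<noteq> 0"
proof -
  define a b :: "complex fps" where "a = - (fps_X + fps_const (-1))" and "b = fps_X + fps_const 1"
  have u: "u_atinf = fps_to_fls a / fps_to_fls b"
    by (simp add: u_atinf_def a_def b_def add.commute fps_const_neg[symmetric])
  have "fps_conv_radius a > 0" "fps_conv_radius b > 0"
    unfolding a_def b_def fps_conv_radius_uminus by (rule fps_conv_radius_X_plus_const)+
  moreover have "a $ 0 \<noteq> 0" "b $ 0 \<noteq> 0"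
    by (simp_all add: a_def b_def)
  ultimately show "conv_fls u_atinf" "fls_subdegree u_atinf = 0" "u_atinf \<noteq> 0"
    unfolding u using fps_to_fls_unit by (simp_all add: conv_fls_divide fls_divide_subdegree)
qed

lemma u_at1_simple_zero: "conv_fls u_at1" "fls_subdegree u_at1 = 1" "u_at1 \<noteq> 0"
proof -
  define b :: "complex fps" where "b = fps_X + fps_const 2"
  have u: "u_at1 = fps_to_fls fps_X / fps_to_fls b"
    by (simp add: u_at1_def b_def add.commute)
  have "fps_conv_radius b > 0"
    unfolding b_def by (rule fps_conv_radius_X_plus_const)
  moreover have "b $ 0 \<noteq> 0"
    by (simp add: b_def)
  moreover have "conv_fls (fps_to_fls fps_X)"
    using conv_fls_fps_to_fls[of fps_X] by simp
  ultimately show "conv_fls u_at1" "fls_subdegree u_at1 = 1"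
    unfolding u using fps_to_fls_unit[of b] by (simp_all add: conv_fls_divide fls_divide_subdegree)
  then show "u_at1 \<noteq> 0" by auto
qed

lemma u_at1_power_clears_poles:
  assumes M: "GL_over conv_fls n M"
  obtains k where "GL_over conv_fls n (u_at1 ^ k \<cdot>\<^sub>m M)"
    "\<forall>a<n. \<forall>c<n. fls_analytic ((u_at1 ^ k \<cdot>\<^sub>m M) $$ (a,c))"
proof -
  have "M \<in> carrier_mat n n" using M unfolding GL_over_def by blast
  moreover obtain k where "\<forall>a<n. \<forall>c<n. fls_analytic (u_at1 ^ k * M $$ (a,c))"
    using exists_power_mult_analytic[OF u_at1_simple_zero(2)] by blast
  ultimately have "\<forall>a<n. \<forall>c<n. fls_analytic ((u_at1 ^ k \<cdot>\<^sub>m M) $$ (a,c))"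
    by simp
  moreover have "GL_over conv_fls n (u_at1 ^ k \<cdot>\<^sub>m M)"
  proof (rule GL_over_smult[OF semiring_closed_conv_fls _ _ _ M])
    show "conv_fls (u_at1 ^ k)" "conv_fls (inverse u_at1 ^ k)"
      using u_at1_simple_zero(1) conv_fls_inverse
      by (simp_all add: semiring_closed_power[OF semiring_closed_conv_fls])
    show "u_at1 ^ k * inverse u_at1 ^ k = 1"
      using u_at1_simple_zero(3) by (simp add: power_mult_distrib[symmetric])
  qed
  ultimately show thesis using that by blast
qed

section \<open>Lowering the order of the determinant at 1\<close>

lemma exists_row_vanishing_at_point:
  fixes A :: "complex fls mat"
  assumes A: "A \<in> carrier_mat n n" and an: "\<forall>a<n. \<forall>c<n. fls_analytic (A $$ (a,c))"
    and sing: "fls_value (det A) = 0"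
  obtains i l where "i < n" "l i = 1"
    "\<forall>a<n. \<forall>c<n. fls_analytic ((T_mat fls_const n i l * A) $$ (a,c))"
    "\<forall>c<n. fls_value ((T_mat fls_const n i l * A) $$ (i,c)) = 0"
proof -
  have "det (map_mat fls_value A) = 0" using analytic_det(2)[OF A an] sing by simp
  then obtain i l where i: "i < n" and li: "l i = 1"
    and null: "\<forall>c<n. (\<Sum>b<n. l b * map_mat fls_value A $$ (b,c)) = 0"
    using exists_normalized_left_null_vector[of "map_mat fls_value A" n] A by auto
  have row: "(T_mat fls_const n i l * A) $$ (a,c) =
      (if a = i then (\<Sum>b<n. fls_const (l b) * A $$ (b,c)) else A $$ (a,c))"
    if "a < n" "c < n" for a c
    using T_mat_mult_index[OF A that] .
  have "fls_analytic ((T_mat fls_const n i l * A) $$ (a,c))" if "a < n" "c < n" for a c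
    using an that unfolding row[OF that]
    by (auto intro!: semiring_closed_sum[OF semiring_closed_fls_analytic] fls_mult_subdegree_ge_0)
  moreover have "fls_value ((T_mat fls_const n i l * A) $$ (i,c)) = 0" if "c < n" for c
    using null A that i unfolding row[OF i that] by (simp add: fls_nth_sum)
  ultimately show thesis using that i li by blast
qed

lemma analytic_inverse_u_at1_mult:
  assumes "fls_analytic f" "fls_value f = 0"
  shows "fls_analytic (inverse u_at1 * f)"
proof (cases "f = 0")
  case False
  have "fls_subdegree f \<noteq> 0"
    using nth_fls_subdegree_nonzero[OF False] assms(2) by auto
  then have "fls_subdegree f \<ge> 1" using assms(1) by linarith
  moreover have "inverse u_at1 \<noteq> 0" "fls_subdegree (inverse u_at1) = -1"
    using u_at1_simple_zero(2) by auto
  ultimately show ?thesis using False by (simp add: fls_subdegree_mult)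
qed simp

lemma analytic_divide_row_by_u_at1:
  assumes X: "X \<in> carrier_mat n n" and an: "\<forall>a<n. \<forall>c<n. fls_analytic (X $$ (a,c))"
    and zero: "\<forall>c<n. fls_value (X $$ (i,c)) = 0"
  shows "\<forall>a<n. \<forall>c<n. fls_analytic ((D_mat n i (inverse u_at1) * X) $$ (a,c))"
  using an zero by (simp add: D_mat_mult_index[OF X] analytic_inverse_u_at1_mult)

lemma det_T_mat_fls_const:
  assumes i: "i < n" and li: "l i = 1"
  shows "det (T_mat fls_const n i l) \<noteq> 0" "fls_subdegree (det (T_mat fls_const n i l)) = 0"
proof -
  have "GL_over fls_analytic n (T_mat fls_const n i l)"
    by (rule GL_over_T_mat[where l = l, OF semiring_closed_fls_analytic _ comm_ring_hom_fls_const i li])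
      simp
  moreover have "\<forall>a<n. \<forall>c<n. fls_analytic (T_mat fls_const n i l $$ (a,c))"
    by (simp add: T_mat_index)
  ultimately have "fls_analytic (det (T_mat fls_const n i l))"
    "fls_value (det (T_mat fls_const n i l)) \<noteq> 0"
    by (simp_all add: analytic_det(1)[OF T_mat_carrier] GL_over_analytic_det_value_nonzero)
  then show "det (T_mat fls_const n i l) \<noteq> 0" "fls_subdegree (det (T_mat fls_const n i l)) = 0"
    by (auto intro: fls_subdegree_eq_0I)
qed

lemma reduce_det_order:
  assumes A: "GL_over conv_fls n A" and an: "\<forall>a<n. \<forall>c<n. fls_analytic (A $$ (a,c))"
    and sing: "fls_value (det A) = 0"
  obtains i l A' where "i < n" "l i = 1" "GL_over conv_fls n A'"
    "\<forall>a<n. \<forall>c<n. fls_analytic (A' $$ (a,c))"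
    "fls_subdegree (det A') = fls_subdegree (det A) - 1"
    "A = T_mat fls_const n i l * D_mat n i u_at1 * A'"
proof -
  have cA: "A \<in> carrier_mat n n" using A unfolding GL_over_def by blast
  obtain i l where i: "i < n" and li: "l i = 1"
    and anT: "\<forall>a<n. \<forall>c<n. fls_analytic ((T_mat fls_const n i l * A) $$ (a,c))"
    and zero: "\<forall>c<n. fls_value ((T_mat fls_const n i l * A) $$ (i,c)) = 0"
    using exists_row_vanishing_at_point[OF cA an sing] by blast
  define A' where "A' = D_mat n i (inverse u_at1) * (T_mat fls_const n i l * A)"
  have u: "conv_fls u_at1" "conv_fls (inverse u_at1)" "u_at1 \<noteq> 0"
    using u_at1_simple_zero conv_fls_inverse by simp_all
  have "GL_over conv_fls n A'"
    unfolding A'_def using u conv_fls_const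
    by (intro GL_over_mult[OF semiring_closed_conv_fls] GL_over_D_mat[OF semiring_closed_conv_fls]
        GL_over_T_mat[where l = l, OF semiring_closed_conv_fls _ comm_ring_hom_fls_const i li] A)
      simp_all
  moreover have "\<forall>a<n. \<forall>c<n. fls_analytic (A' $$ (a,c))"
    unfolding A'_def
    by (rule analytic_divide_row_by_u_at1[OF mult_carrier_mat[OF T_mat_carrier cA] anT zero])
  moreover have "fls_subdegree (det A') = fls_subdegree (det A) - 1"
  proof -
    have "det A' = inverse u_at1 * (det (T_mat fls_const n i l) * det A)"
      unfolding A'_def using i
      by (simp add: det_mult[OF D_mat_carrier mult_carrier_mat[OF T_mat_carrier cA]]
          det_mult[OF T_mat_carrier cA] det_D_mat)
    then show ?thesis
      using GL_over_det_nonzero[OF A] det_T_mat_fls_const[where l = l, OF i li] u(3)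
        u_at1_simple_zero(2)
      by (simp add: fls_subdegree_mult)
  qed
  moreover have "A = T_mat fls_const n i (T_inv_row l i) * D_mat n i u_at1 * A'"
    unfolding A'_def
    by (rule T_D_mult_cancel[where l = l, OF comm_ring_hom_fls_const i li u(3) cA, symmetric])
  ultimately show thesis
    using that[of i "T_inv_row l i" A'] i by (simp add: T_inv_row_pivot)
qed

lemma analytic_GL_factorization:
  assumes "GL_over conv_fls n A" "\<forall>a<n. \<forall>c<n. fls_analytic (A $$ (a,c))"
  shows "\<exists>steps R. normalized_steps n steps \<and> GL_over conv_fls n R \<and> regular_fls n R \<and>
    A = TD_product fls_const n u_at1 steps * R"
proof -
  have cA: "A \<in> carrier_mat n n" using assms(1) unfolding GL_over_def by blast
  obtain d where "fls_subdegree (det A) = int d"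
    using analytic_det(1)[OF cA assms(2)] by (metis nonneg_eq_int)
  with assms show ?thesis
  proof (induction d arbitrary: A)
    case 0
    then have cA: "A \<in> carrier_mat n n" and conv: "\<forall>a<n. \<forall>c<n. conv_fls (A $$ (a,c))"
      unfolding GL_over_def by blast+
    have "fls_value (det A) \<noteq> 0"
      using nth_fls_subdegree_nonzero[OF GL_over_det_nonzero[OF "0.prems"(1)]] "0.prems"(3) by simp
    then have "regular_fls n A"
      using "0.prems"(2) cA conv by (intro regular_flsI) auto
    with "0.prems"(1) cA show ?case
      by (intro exI[of _ "[]"] exI[of _ A]) (simp add: normalized_steps_def TD_product_Nil)
  next
    case (Suc d)
    then have "fls_value (det A) = 0" by (intro fls_eq0_below_subdegree) simp
    then obtain i l A' where i: "i < n" "l i = 1" and A': "GL_over conv_fls n A'"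
      "\<forall>a<n. \<forall>c<n. fls_analytic (A' $$ (a,c))"
      and det: "fls_subdegree (det A') = fls_subdegree (det A) - 1"
      and A_eq: "A = T_mat fls_const n i l * D_mat n i u_at1 * A'"
      by (rule reduce_det_order[OF Suc.prems(1,2)])
    have "fls_subdegree (det A') = int d"
      using det Suc.prems(3) by simp
    then obtain steps R where steps: "normalized_steps n steps"
      and R: "GL_over conv_fls n R" "regular_fls n R"
      and A'_eq: "A' = TD_product fls_const n u_at1 steps * R"
      using Suc.IH[OF A'] by blast
    have "R \<in> carrier_mat n n" using R(1) unfolding GL_over_def by blast
    then have "A = TD_product fls_const n u_at1 ((i,l) # steps) * R"
      unfolding A_eq A'_eq TD_product_Cons
      by (simp add: assoc_mult_mat[of _ n n _ n _ n] mult_carrier_mat[of _ n n _ n])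
    with i steps R show ?case
      by (intro exI[of _ "(i,l) # steps"] exI[of _ R]) (simp add: normalized_steps_Cons)
  qed
qed

theorem mainTheorem13:
  fixes n :: nat and M1 :: "complex fls mat"
  assumes "GL_over conv_fls n M1"
  shows "\<exists>R1 k steps.
     GL_over conv_fls n R1 \<and> regular_fls n R1 \<and>
     (\<forall>(i,l) \<in> set steps. i < n \<and> (\<exists>j<n. l j \<noteq> 0)) \<and>
     GL_over (\<lambda>_. True) n (C_form emb_rat n u_rat k steps) \<and>
     regular_fls n (C_form fls_const n u_at0 k steps) \<and>
     regular_fls n (C_form fls_const n u_atinf k steps) \<and>
     M1 = C_form fls_const n u_at1 k steps * R1"
proof -
  obtain k where "GL_over conv_fls n (u_at1 ^ k \<cdot>\<^sub>m M1)"
    "\<forall>a<n. \<forall>c<n. fls_analytic ((u_at1 ^ k \<cdot>\<^sub>m M1) $$ (a,c))"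
    using u_at1_power_clears_poles[OF assms] by blast
  then obtain steps R where steps: "normalized_steps n steps"
    and R: "GL_over conv_fls n R" "regular_fls n R"
    and eq: "u_at1 ^ k \<cdot>\<^sub>m M1 = TD_product fls_const n u_at1 steps * R"
    using analytic_GL_factorization by blast
  have "R \<in> carrier_mat n n"
    using R(1) unfolding GL_over_def by blast
  then have "M1 = C_form fls_const n u_at1 k steps * R"
    by (rule C_form_mult_if_power_smult_eq[OF _ u_at1_simple_zero(3) eq])
  moreover have "GL_over (\<lambda>_. True) n (C_form emb_rat n u_rat k steps)"
    by (rule GL_over_C_form[OF semiring_closed_True _ _ _ comm_ring_hom_emb_rat u_rat_nonzero steps])
      simp_all
  moreover have "\<forall>(i,l) \<in> set steps. i < n \<and> (\<exists>j<n. l j \<noteq> 0)"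
    using steps unfolding normalized_steps_def by fastforce
  ultimately show ?thesis
    using R regular_fls_C_form[OF u_at0_unit steps] regular_fls_C_form[OF u_atinf_unit steps]
    by blast
qed

end
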